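(* Let $X$ be a Tychonoff space with $|X|>1$. The following are equivalent: (a) $X$ has an isolated point; (b) $\mathbb{R}$ is a direct summand of $C(X)$ (as a ring); (c) $\mathbb{AG}(X)$ has a leaf vertex; (d) $\mathbb{AG}(X)$ is not triangulated.
   Context: $C(X)$ is the ring of real-valued continuous functions on $X$. $\mathbb{A}(X)$ is the set of nonzero ideals $I$ of $C(X)$ for which there is a nonzero ideal $J$ with $IJ=\{0\}$; $\mathbb{AG}(X)$ has vertex set $\mathbb{A}(X)$, distinct $I,J$ adjacent iff $IJ=\{0\}$. A leaf vertex is a vertex adjacent to exactly one vertex. A graph is triangulated if every vertex lies on some triangle (3-cycle). *)

theory Defs
  imports "HOL-Analysis.Analysis" "HOL-Algebra.Ideal_Product" "HOL-Algebra.Chinese_Remainder"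
begin

text \<open>The ring C(X) of real-valued continuous functions on X, with pointwise operations.
  Functions are taken extensional (value undefined outside topspace X) so that equality is
  equality on X.\<close>
definition CX :: "'a topology \<Rightarrow> ('a \<Rightarrow> real) ring" where
  "CX X = \<lparr> carrier = {f. continuous_map X euclideanreal f \<and> f \<in> extensional (topspace X)},
            mult = (\<lambda>f g. restrict (\<lambda>x. f x * g x) (topspace X)),
            one = restrict (\<lambda>x. 1) (topspace X),
            zero = restrict (\<lambda>x. 0) (topspace X),
            add = (\<lambda>f g. restrict (\<lambda>x. f x + g x) (topspace X)) \<rparr>"

definition real_ring :: "real ring" where
  "real_ring = \<lparr> carrier = UNIV, mult = (*), one = 1, zero = 0, add = (+) \<rparr>"

definition tychonoff_space :: "'a topology \<Rightarrow> bool" where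
  "tychonoff_space X \<longleftrightarrow> completely_regular_space X \<and> Hausdorff_space X"

definition AX :: "'a topology \<Rightarrow> ('a \<Rightarrow> real) set set" where
  "AX X = {I. ideal I (CX X) \<and> I \<noteq> {\<zero>\<^bsub>CX X\<^esub>} \<and>
              (\<exists>J. ideal J (CX X) \<and> J \<noteq> {\<zero>\<^bsub>CX X\<^esub>} \<and> I \<cdot>\<^bsub>CX X\<^esub> J = {\<zero>\<^bsub>CX X\<^esub>})}"

definition AG_adj :: "'a topology \<Rightarrow> ('a \<Rightarrow> real) set \<Rightarrow> ('a \<Rightarrow> real) set \<Rightarrow> bool" where
  "AG_adj X I J \<longleftrightarrow> I \<in> AX X \<and> J \<in> AX X \<and> I \<noteq> J \<and> I \<cdot>\<^bsub>CX X\<^esub> J = {\<zero>\<^bsub>CX X\<^esub>}"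

definition AG_has_leaf :: "'a topology \<Rightarrow> bool" where
  "AG_has_leaf X \<longleftrightarrow> (\<exists>I \<in> AX X. \<exists>!J. AG_adj X I J)"

definition AG_triangulated :: "'a topology \<Rightarrow> bool" where
  "AG_triangulated X \<longleftrightarrow>
     (\<forall>I \<in> AX X. \<exists>J K. AG_adj X I J \<and> AG_adj X J K \<and> AG_adj X K I)"

end

theory Submission imports Defs begin

text \<open>
  If \<open>x\<close> is isolated, evaluation at \<open>x\<close> splits \<open>C(X) \<cong> \<real> \<times> C(X - {x})\<close>, and the ideal
  of functions vanishing at \<open>x\<close> has as its only neighbour the ideal of functions supported
  on \<open>{x}\<close>, so it is a leaf; a graph with a leaf is not triangulated. Conversely, without
  isolated points every vertex \<open>I\<close> of \<open>AG(X)\<close> vanishes on a nonempty open set \<open>U\<close>, which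
  contains two points with disjoint neighbourhoods \<open>U\<^sub>1, U\<^sub>2 \<subseteq> U\<close>; bump functions give
  ideals supported in \<open>U\<^sub>1\<close> and in \<open>U\<^sub>2\<close> that form a triangle with \<open>I\<close>. Finally, a
  decomposition \<open>C(X) \<cong> \<real> \<times> S\<close> yields a minimal principal ideal of \<open>C(X)\<close>, and complete
  regularity forces its generator to be supported at a single, hence isolated, point.
\<close>

subsection \<open>The ring \<open>C(X)\<close>\<close>

lemma CX_simps:
  "carrier (CX X) = {f. continuous_map X euclideanreal f \<and> f \<in> extensional (topspace X)}"
  "f \<otimes>\<^bsub>CX X\<^esub> g = restrict (\<lambda>x. f x * g x) (topspace X)"
  "f \<oplus>\<^bsub>CX X\<^esub> g = restrict (\<lambda>x. f x + g x) (topspace X)"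
  "\<one>\<^bsub>CX X\<^esub> = restrict (\<lambda>x. 1) (topspace X)"
  "\<zero>\<^bsub>CX X\<^esub> = restrict (\<lambda>x. 0) (topspace X)"
  by (simp_all add: CX_def)

lemma CX_carrier_iff:
  "f \<in> carrier (CX X) \<longleftrightarrow> continuous_map X euclideanreal f \<and> f \<in> extensional (topspace X)"
  by (simp add: CX_def)

lemma restrict_in_CX:
  "continuous_map X euclideanreal f \<Longrightarrow> restrict f (topspace X) \<in> carrier (CX X)"
  unfolding CX_carrier_iff by (auto intro: continuous_map_eq)

lemma CX_eqI:
  "\<lbrakk>f \<in> carrier (CX X); g \<in> carrier (CX X); \<And>x. x \<in> topspace X \<Longrightarrow> f x = g x\<rbrakk> \<Longrightarrow> f = g"
  unfolding CX_carrier_iff by (meson extensionalityI)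

lemma CX_const: "restrict (\<lambda>x. c) (topspace X) \<in> carrier (CX X)"
  by (intro restrict_in_CX) simp

lemma cring_CX: "cring (CX X)"
proof (rule cringI)
  have mult_closed: "restrict (\<lambda>x. f x * g x) (topspace X) \<in> carrier (CX X)"
    if "f \<in> carrier (CX X)" "g \<in> carrier (CX X)" for f g
    using that by (intro restrict_in_CX continuous_map_real_mult) (auto simp: CX_carrier_iff)
  have add_closed: "restrict (\<lambda>x. f x + g x) (topspace X) \<in> carrier (CX X)"
    if "f \<in> carrier (CX X)" "g \<in> carrier (CX X)" for f g
    using that by (intro restrict_in_CX continuous_map_add) (auto simp: CX_carrier_iff)
  show "abelian_group (CX X)"
  proof (rule abelian_groupI)
    fix f assume f: "f \<in> carrier (CX X)"
    have "restrict (\<lambda>x. - f x) (topspace X) \<in> carrier (CX X)"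
      using f by (intro restrict_in_CX continuous_map_minus) (auto simp: CX_carrier_iff)
    moreover have "restrict (\<lambda>x. - f x) (topspace X) \<oplus>\<^bsub>CX X\<^esub> f = \<zero>\<^bsub>CX X\<^esub>"
      by (auto simp: CX_simps)
    ultimately show "\<exists>y\<in>carrier (CX X). y \<oplus>\<^bsub>CX X\<^esub> f = \<zero>\<^bsub>CX X\<^esub>" by blast
  next
    fix f assume "f \<in> carrier (CX X)"
    then show "\<zero>\<^bsub>CX X\<^esub> \<oplus>\<^bsub>CX X\<^esub> f = f"
      by (auto simp: CX_simps CX_carrier_iff extensional_def fun_eq_iff)
  qed (auto simp: CX_simps add_closed[unfolded CX_simps] CX_const[unfolded CX_simps] add_ac
      intro: continuous_map_add)
  show "comm_monoid (CX X)"
  proof (rule comm_monoidI)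
    fix f assume "f \<in> carrier (CX X)"
    then show "\<one>\<^bsub>CX X\<^esub> \<otimes>\<^bsub>CX X\<^esub> f = f"
      by (auto simp: CX_simps CX_carrier_iff extensional_def fun_eq_iff)
  qed (auto simp: CX_simps mult_closed[unfolded CX_simps] CX_const[unfolded CX_simps] mult_ac
      intro: continuous_map_real_mult)
qed (auto simp: CX_simps distrib_right)

lemmas ring_CX = cring.axioms(1)[OF cring_CX]
lemmas CX_m_closed = monoid.m_closed[OF ring.axioms(2)[OF ring_CX]]

lemma CX_nonzero_iff:
  assumes "f \<in> carrier (CX X)"
  shows "f \<noteq> \<zero>\<^bsub>CX X\<^esub> \<longleftrightarrow> (\<exists>x\<in>topspace X. f x \<noteq> 0)"
proof
  assume "f \<noteq> \<zero>\<^bsub>CX X\<^esub>"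
  moreover have "\<zero>\<^bsub>CX X\<^esub> \<in> carrier (CX X)" using CX_const[of 0 X] by (simp add: CX_simps(5))
  ultimately show "\<exists>x\<in>topspace X. f x \<noteq> 0"
    using CX_eqI[OF assms] by (force simp: CX_simps(5))
qed (auto simp: CX_simps(5))

lemma CX_ideal_prod_eq_zero_iff:
  assumes I: "ideal I (CX X)" and J: "ideal J (CX X)"
  shows "I \<cdot>\<^bsub>CX X\<^esub> J = {\<zero>\<^bsub>CX X\<^esub>} \<longleftrightarrow> (\<forall>f\<in>I. \<forall>g\<in>J. \<forall>x\<in>topspace X. f x * g x = 0)"
proof
  assume IJ: "I \<cdot>\<^bsub>CX X\<^esub> J = {\<zero>\<^bsub>CX X\<^esub>}"
  show "\<forall>f\<in>I. \<forall>g\<in>J. \<forall>x\<in>topspace X. f x * g x = 0"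
  proof (intro ballI)
    fix f g x assume "f \<in> I" "g \<in> J" "x \<in> topspace X"
    then have "f \<otimes>\<^bsub>CX X\<^esub> g \<in> I \<cdot>\<^bsub>CX X\<^esub> J" by (intro ideal_prod.prod)
    then have "(f \<otimes>\<^bsub>CX X\<^esub> g) x = 0" using IJ \<open>x \<in> topspace X\<close> by (simp add: CX_simps)
    then show "f x * g x = 0" using \<open>x \<in> topspace X\<close> by (simp add: CX_simps)
  qed
next
  assume pointwise: "\<forall>f\<in>I. \<forall>g\<in>J. \<forall>x\<in>topspace X. f x * g x = 0"
  have "s = \<zero>\<^bsub>CX X\<^esub>" if "s \<in> I \<cdot>\<^bsub>CX X\<^esub> J" for s
    using that by induct (use pointwise in \<open>auto simp: CX_simps fun_eq_iff\<close>)
  moreover have "I \<cdot>\<^bsub>CX X\<^esub> J \<noteq> {}"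
    using ring.ideal_prod_is_ideal[OF ring_CX I J] additive_subgroup.zero_closed ideal.axioms(1)
    by blast
  ultimately show "I \<cdot>\<^bsub>CX X\<^esub> J = {\<zero>\<^bsub>CX X\<^esub>}" by blast
qed

lemma CX_ideal_nonzero_point:
  assumes "ideal J (CX X)" "J \<noteq> {\<zero>\<^bsub>CX X\<^esub>}"
  obtains g x where "g \<in> J" "x \<in> topspace X" "g x \<noteq> 0"
proof -
  have "\<zero>\<^bsub>CX X\<^esub> \<in> J"
    using assms(1) by (simp add: additive_subgroup.zero_closed ideal.axioms(1))
  then obtain g where "g \<in> J" "g \<noteq> \<zero>\<^bsub>CX X\<^esub>" using assms(2) by blast
  then show thesis
    using that CX_nonzero_iff[OF ideal.Icarr[OF assms(1)]] by blast
qed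

definition supported_in :: "'a topology \<Rightarrow> ('a \<Rightarrow> real) set \<Rightarrow> 'a set \<Rightarrow> bool" where
  "supported_in X F V \<longleftrightarrow> (\<forall>f\<in>F. \<forall>x\<in>topspace X. f x \<noteq> 0 \<longrightarrow> x \<in> V)"

lemma CX_ideal_prod_eq_zero_if_disjoint_supports:
  assumes "ideal I (CX X)" "ideal J (CX X)" "supported_in X I V" "supported_in X J W"
    and "V \<inter> W = {}"
  shows "I \<cdot>\<^bsub>CX X\<^esub> J = {\<zero>\<^bsub>CX X\<^esub>}"
  using assms unfolding CX_ideal_prod_eq_zero_iff[OF assms(1,2)] supported_in_def
  by (metis disjoint_iff mult_eq_0_iff)

lemma supported_in_cgenideal_CX:
  "supported_in X {h} V \<Longrightarrow> supported_in X (cgenideal (CX X) h) V"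
  unfolding supported_in_def cgenideal_def by (auto simp: CX_simps(2))

subsection \<open>The annihilating-ideal graph\<close>

lemma AG_adjI:
  assumes "ideal I (CX X)" "I \<noteq> {\<zero>\<^bsub>CX X\<^esub>}" "ideal J (CX X)" "J \<noteq> {\<zero>\<^bsub>CX X\<^esub>}"
    and "I \<noteq> J" "I \<cdot>\<^bsub>CX X\<^esub> J = {\<zero>\<^bsub>CX X\<^esub>}"
  shows "AG_adj X I J"
proof -
  have "J \<cdot>\<^bsub>CX X\<^esub> I = {\<zero>\<^bsub>CX X\<^esub>}"
    using assms(6) by (simp only: cring.ideal_prod_commute[OF cring_CX assms(1,3)])
  then show ?thesis using assms unfolding AG_adj_def AX_def by blast
qed

lemma AG_adj_sym:
  assumes "AG_adj X I J"
  shows "AG_adj X J I"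
proof -
  have I: "ideal I (CX X)" "I \<noteq> {\<zero>\<^bsub>CX X\<^esub>}" and J: "ideal J (CX X)" "J \<noteq> {\<zero>\<^bsub>CX X\<^esub>}"
    and "I \<noteq> J" and IJ: "I \<cdot>\<^bsub>CX X\<^esub> J = {\<zero>\<^bsub>CX X\<^esub>}"
    using assms by (auto simp: AG_adj_def AX_def)
  from IJ have "J \<cdot>\<^bsub>CX X\<^esub> I = {\<zero>\<^bsub>CX X\<^esub>}"
    by (simp only: cring.ideal_prod_commute[OF cring_CX I(1) J(1)])
  with \<open>I \<noteq> J\<close> show ?thesis by (intro AG_adjI[OF J I]) auto
qed

lemma not_AG_triangulated_if_leaf:
  assumes "AG_has_leaf X"
  shows "\<not> AG_triangulated X"
proof
  assume "AG_triangulated X"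
  obtain I where "I \<in> AX X" and leaf: "\<exists>!J. AG_adj X I J"
    using assms by (auto simp: AG_has_leaf_def)
  then obtain J K where "AG_adj X I J" "AG_adj X J K" "AG_adj X K I"
    using \<open>AG_triangulated X\<close> by (auto simp: AG_triangulated_def)
  then have "J = K" using leaf AG_adj_sym by blast
  with \<open>AG_adj X J K\<close> show False by (simp add: AG_adj_def)
qed

subsection \<open>Spaces without isolated points\<close>

lemma CX_bump:
  assumes "completely_regular_space X" "openin X V" "p \<in> V"
  obtains h where "h \<in> carrier (CX X)" "h p = 1" "supported_in X {h} V"
proof -
  obtain f where f: "continuous_map X euclideanreal f" "f p = 0" "f ` (topspace X - V) \<subseteq> {1}"
    using assms unfolding completely_regular_space_alt' by blast
  have "p \<in> topspace X" using assms openin_subset by blast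
  then show thesis
    using f by (intro that[of "restrict (\<lambda>x. 1 - f x) (topspace X)"] restrict_in_CX)
      (auto simp: supported_in_def intro: continuous_map_diff)
qed

lemma CX_ideal_supported_in_open:
  assumes "completely_regular_space X" "openin X V" "p \<in> V"
  obtains J h where "ideal J (CX X)" "h \<in> J" "h p = 1" "supported_in X J V"
proof -
  obtain h where "h \<in> carrier (CX X)" "h p = 1" "supported_in X {h} V"
    using CX_bump[OF assms] .
  then show thesis
    using that cring.cgenideal_ideal[OF cring_CX] ring.cgenideal_self[OF ring_CX]
      supported_in_cgenideal_CX by metis
qed

lemma AX_vanishes_on_open:
  assumes "I \<in> AX X"
  obtains U where "openin X U" "U \<noteq> {}" "supported_in X I (- U)"
proof -
  obtain J where I: "ideal I (CX X)" and J: "ideal J (CX X)" "J \<noteq> {\<zero>\<^bsub>CX X\<^esub>}"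
    and IJ: "I \<cdot>\<^bsub>CX X\<^esub> J = {\<zero>\<^bsub>CX X\<^esub>}"
    using assms unfolding AX_def by blast
  obtain g p where g: "g \<in> J" "p \<in> topspace X" "g p \<noteq> 0"
    using CX_ideal_nonzero_point[OF J] by blast
  define U where "U = {x \<in> topspace X. g x \<in> - {0}}"
  have "openin X U"
    unfolding U_def using ideal.Icarr[OF J(1) g(1)]
    by (intro openin_continuous_map_preimage) (auto simp: CX_carrier_iff)
  moreover have "p \<in> U" using g by (simp add: U_def)
  moreover have "supported_in X I (- U)"
    using IJ g(1) unfolding CX_ideal_prod_eq_zero_iff[OF I J(1)] supported_in_def U_def by auto
  ultimately show thesis using that by blast
qed

lemma AG_triangulated_if_no_isolated_points:
  assumes "tychonoff_space X" and no_isolated: "\<forall>x\<in>topspace X. \<not> openin X {x}"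
  shows "AG_triangulated X"
  unfolding AG_triangulated_def
proof
  fix I assume "I \<in> AX X"
  then have I: "ideal I (CX X)" "I \<noteq> {\<zero>\<^bsub>CX X\<^esub>}" by (auto simp: AX_def)
  obtain U where U: "openin X U" "U \<noteq> {}" and I_supp: "supported_in X I (- U)"
    using AX_vanishes_on_open[OF \<open>I \<in> AX X\<close>] .
  obtain p where "p \<in> U" using U(2) by blast
  have p: "p \<in> topspace X" using \<open>p \<in> U\<close> U(1) openin_subset by blast
  then have "U \<noteq> {p}" using no_isolated U(1) by blast
  then obtain q where "q \<in> U" "q \<noteq> p" using \<open>p \<in> U\<close> by blast
  have q: "q \<in> topspace X" using \<open>q \<in> U\<close> U(1) openin_subset by blast
  have creg: "completely_regular_space X" and "Hausdorff_space X"
    using assms(1) by (auto simp: tychonoff_space_def)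
  then obtain U1 U2 where U12: "openin X U1" "openin X U2" "p \<in> U1" "q \<in> U2" "disjnt U1 U2"
    using p q \<open>q \<noteq> p\<close> unfolding Hausdorff_space_def by metis
  obtain J h1 where J: "ideal J (CX X)" "h1 \<in> J" "h1 p = 1" "supported_in X J (U \<inter> U1)"
    using CX_ideal_supported_in_open[OF creg openin_Int[OF U(1) U12(1)], of p] \<open>p \<in> U\<close> U12(3)
    by blast
  obtain K h2 where K: "ideal K (CX X)" "h2 \<in> K" "h2 q = 1" "supported_in X K (U \<inter> U2)"
    using CX_ideal_supported_in_open[OF creg openin_Int[OF U(1) U12(2)], of q] \<open>q \<in> U\<close> U12(4)
    by blast
  have "h1 \<noteq> \<zero>\<^bsub>CX X\<^esub>" "h2 \<noteq> \<zero>\<^bsub>CX X\<^esub>"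
    using J(3) K(3) p q by (metis CX_simps(5) restrict_apply' zero_neq_one)+
  then have "J \<noteq> {\<zero>\<^bsub>CX X\<^esub>}" "K \<noteq> {\<zero>\<^bsub>CX X\<^esub>}" using J(2) K(2) by auto
  moreover have "h1 \<notin> I" "h2 \<notin> I" "h1 \<notin> K"
    using I_supp K(4) J(3) K(3) p q \<open>p \<in> U\<close> \<open>q \<in> U\<close> U12(3,5)
    unfolding supported_in_def disjnt_def by force+
  then have "I \<noteq> J" "I \<noteq> K" "J \<noteq> K" using J(2) K(2) by auto
  moreover have "- U \<inter> (U \<inter> U1) = {}" "(U \<inter> U1) \<inter> (U \<inter> U2) = {}" "(U \<inter> U2) \<inter> - U = {}"
    using U12(5) by (auto simp: disjnt_def)
  then have "I \<cdot>\<^bsub>CX X\<^esub> J = {\<zero>\<^bsub>CX X\<^esub>}" "J \<cdot>\<^bsub>CX X\<^esub> K = {\<zero>\<^bsub>CX X\<^esub>}"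
    "K \<cdot>\<^bsub>CX X\<^esub> I = {\<zero>\<^bsub>CX X\<^esub>}"
    using CX_ideal_prod_eq_zero_if_disjoint_supports I(1) I_supp J(1,4) K(1,4) by blast+
  ultimately have "AG_adj X I J" "AG_adj X J K" "AG_adj X K I"
    using I J(1) K(1) by (auto intro!: AG_adjI)
  then show "\<exists>J K. AG_adj X I J \<and> AG_adj X J K \<and> AG_adj X K I" by blast
qed

subsection \<open>Isolated points\<close>

lemma tychonoff_space_closedin_singleton:
  assumes "tychonoff_space X" "x \<in> topspace X"
  shows "closedin X {x}"
proof -
  have "t1_space X" using assms(1) by (simp add: tychonoff_space_def Hausdorff_imp_t1_space)
  then show ?thesis using assms(2) by (simp add: t1_space_closedin_singleton)
qed

lemma continuous_map_update_isolated_point: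
  assumes "closedin X {x}" "openin X {x}"
    and g: "continuous_map (subtopology X (topspace X - {x})) euclideanreal g"
  shows "continuous_map X euclideanreal (\<lambda>y. if y = x then c else g y)"
proof (rule continuous_map_cases)
  have "X closure_of {y. y \<noteq> x} = X closure_of (topspace X - {x})"
    by (subst closure_of_restrict) (simp add: Diff_eq Int_commute Compl_eq)
  also have "\<dots> = topspace X - {x}"
    using closedin_diff[OF closedin_topspace assms(2)] by (simp add: closure_of_closedin)
  finally show "continuous_map (subtopology X (X closure_of {y. \<not> y = x})) euclideanreal g"
    using g by simp
  show "\<And>y. y \<in> X frontier_of {y. y = x} \<Longrightarrow> c = g y"
    using assms(1,2) by (simp add: frontier_of_def closure_of_closedin interior_of_openin)
qed simp

lemma two_valued_isolated_point_in_CX: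
  "\<lbrakk>closedin X {x}; openin X {x}\<rbrakk> \<Longrightarrow> restrict (\<lambda>z. if z = x then a else b) (topspace X) \<in> carrier (CX X)"
  by (intro restrict_in_CX continuous_map_update_isolated_point) auto

lemma CX_ideal_supported_at_isolated_point:
  assumes "closedin X {x}" "openin X {x}"
    and J: "ideal J (CX X)" "J \<noteq> {\<zero>\<^bsub>CX X\<^esub>}" "supported_in X J {x}"
  shows "J = cgenideal (CX X) (restrict (\<lambda>z. if z = x then 1 else 0) (topspace X))"
    (is "J = cgenideal (CX X) ?\<delta>")
proof
  have \<delta>: "?\<delta> \<in> carrier (CX X)" using two_valued_isolated_point_in_CX[OF assms(1,2)] .
  show "J \<subseteq> cgenideal (CX X) ?\<delta>"
  proof
    fix g assume "g \<in> J"
    then have g: "g \<in> carrier (CX X)" using ideal.Icarr[OF J(1)] by blast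
    have "g = g \<otimes>\<^bsub>CX X\<^esub> ?\<delta>"
      using \<open>g \<in> J\<close> J(3) CX_m_closed[OF g \<delta>]
      by (intro CX_eqI[OF g]) (auto simp: CX_simps(2) supported_in_def)
    then show "g \<in> cgenideal (CX X) ?\<delta>" unfolding cgenideal_def using g by blast
  qed
  obtain g y where g: "g \<in> J" "y \<in> topspace X" "g y \<noteq> 0"
    using CX_ideal_nonzero_point[OF J(1,2)] .
  then have "y = x" using J(3) by (auto simp: supported_in_def)
  have c: "restrict (\<lambda>_. 1 / g x) (topspace X) \<in> carrier (CX X)" by (fact CX_const)
  have "?\<delta> = restrict (\<lambda>_. 1 / g x) (topspace X) \<otimes>\<^bsub>CX X\<^esub> g"
  proof (rule CX_eqI[OF \<delta> CX_m_closed[OF c ideal.Icarr[OF J(1) g(1)]]])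
    fix z assume "z \<in> topspace X"
    moreover have "g z = 0" if "z \<noteq> x" using J(3) g(1) \<open>z \<in> topspace X\<close> that
      by (auto simp: supported_in_def)
    ultimately show "?\<delta> z = (restrict (\<lambda>_. 1 / g x) (topspace X) \<otimes>\<^bsub>CX X\<^esub> g) z"
      using g(3) \<open>y = x\<close> by (simp add: CX_simps(2))
  qed
  then have "?\<delta> \<in> J" using ideal.I_l_closed[OF J(1) g(1) c] by simp
  then show "cgenideal (CX X) ?\<delta> \<subseteq> J" by (rule ring.cgenideal_minimal[OF ring_CX J(1)])
qed

lemma AG_has_leaf_if_isolated_point:
  assumes "tychonoff_space X" "x \<in> topspace X" "openin X {x}" "y \<in> topspace X" "y \<noteq> x"
  shows "AG_has_leaf X"
proof -
  have closed: "closedin X {x}" using tychonoff_space_closedin_singleton assms(1,2) .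
  define \<delta> where "\<delta> = restrict (\<lambda>z. if z = x then 1 else 0 :: real) (topspace X)"
  define \<delta>' where "\<delta>' = restrict (\<lambda>z. if z = x then 0 else 1 :: real) (topspace X)"
  define M where "M = cgenideal (CX X) \<delta>'"
  define I where "I = cgenideal (CX X) \<delta>"
  have \<delta>: "\<delta> \<in> carrier (CX X)" and \<delta>': "\<delta>' \<in> carrier (CX X)"
    unfolding \<delta>_def \<delta>'_def using two_valued_isolated_point_in_CX[OF closed assms(3)] by blast+
  have "supported_in X {\<delta>'} (- {x})" "supported_in X {\<delta>} {x}"
    by (auto simp: supported_in_def \<delta>_def \<delta>'_def)
  then have M: "ideal M (CX X)" "\<delta>' \<in> M" "supported_in X M (- {x})"
    and I: "ideal I (CX X)" "\<delta> \<in> I" "supported_in X I {x}"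
    unfolding M_def I_def using \<delta> \<delta>' supported_in_cgenideal_CX
      cring.cgenideal_ideal[OF cring_CX] ring.cgenideal_self[OF ring_CX] by blast+
  have "\<delta>' y = 1" "\<delta> x = 1" using assms(2,4,5) by (simp_all add: \<delta>_def \<delta>'_def)
  then have "\<delta>' \<noteq> \<zero>\<^bsub>CX X\<^esub>" "\<delta> \<noteq> \<zero>\<^bsub>CX X\<^esub>"
    unfolding CX_nonzero_iff[OF \<delta>'] CX_nonzero_iff[OF \<delta>] using assms(2,4)
    by (intro bexI[of _ y] bexI[of _ x]; simp)+
  then have "M \<noteq> {\<zero>\<^bsub>CX X\<^esub>}" "I \<noteq> {\<zero>\<^bsub>CX X\<^esub>}" using M(2) I(2) by blast+
  moreover have "\<delta>' \<notin> I" using I(3) \<open>\<delta>' y = 1\<close> assms(4,5) unfolding supported_in_def by force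
  then have "M \<noteq> I" using M(2) by blast
  moreover have "M \<cdot>\<^bsub>CX X\<^esub> I = {\<zero>\<^bsub>CX X\<^esub>}"
    using CX_ideal_prod_eq_zero_if_disjoint_supports[OF M(1) I(1) M(3) I(3)] by simp
  ultimately have adj: "AG_adj X M I" using AG_adjI M(1) I(1) by blast
  have unique: "J = I" if "AG_adj X M J" for J
  proof -
    have J: "ideal J (CX X)" "J \<noteq> {\<zero>\<^bsub>CX X\<^esub>}" and MJ: "M \<cdot>\<^bsub>CX X\<^esub> J = {\<zero>\<^bsub>CX X\<^esub>}"
      using that by (auto simp: AG_adj_def AX_def)
    have "g z = 0" if "g \<in> J" "z \<in> topspace X" "z \<noteq> x" for g z
    proof -
      have "\<delta>' z * g z = 0"
        using MJ M(2) that unfolding CX_ideal_prod_eq_zero_iff[OF M(1) J(1)] by blast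
      then show "g z = 0" using that(2,3) by (simp add: \<delta>'_def)
    qed
    then have "supported_in X J {x}" unfolding supported_in_def by blast
    then show "J = I"
      unfolding I_def \<delta>_def by (rule CX_ideal_supported_at_isolated_point[OF closed assms(3) J])
  qed
  have "M \<in> AX X" using adj by (simp add: AG_adj_def)
  moreover have "\<exists>!J. AG_adj X M J" using adj unique by blast
  ultimately show ?thesis unfolding AG_has_leaf_def by blast
qed

subsection \<open>Direct summands of \<open>C(X)\<close>\<close>

lemma RDirProd_simps:
  "(a, s) \<otimes>\<^bsub>RDirProd R S\<^esub> (b, t) = (a \<otimes>\<^bsub>R\<^esub> b, s \<otimes>\<^bsub>S\<^esub> t)"
  "(a, s) \<oplus>\<^bsub>RDirProd R S\<^esub> (b, t) = (a \<oplus>\<^bsub>R\<^esub> b, s \<oplus>\<^bsub>S\<^esub> t)"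
  "\<one>\<^bsub>RDirProd R S\<^esub> = (\<one>\<^bsub>R\<^esub>, \<one>\<^bsub>S\<^esub>)"
  "\<zero>\<^bsub>RDirProd R S\<^esub> = (\<zero>\<^bsub>R\<^esub>, \<zero>\<^bsub>S\<^esub>)"
  by (simp_all add: RDirProd_def DirProd_def monoid.defs)

lemma real_ring_simps:
  "carrier real_ring = UNIV" "a \<otimes>\<^bsub>real_ring\<^esub> b = a * b" "a \<oplus>\<^bsub>real_ring\<^esub> b = a + b"
  "\<one>\<^bsub>real_ring\<^esub> = 1" "\<zero>\<^bsub>real_ring\<^esub> = 0"
  by (simp_all add: real_ring_def)

lemma CX_ring_iso_RDirProd_isolated_point:
  assumes x: "x \<in> topspace X" and "closedin X {x}" "openin X {x}"
  defines "A \<equiv> topspace X - {x}"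
  shows "(\<lambda>f. (f x, restrict f A)) \<in> ring_iso (CX X) (RDirProd real_ring (CX (subtopology X A)))"
    (is "?\<phi> \<in> ring_iso _ ?P")
proof -
  have top_A: "topspace X \<inter> A = A" by (auto simp: A_def)
  have carrier_P: "carrier ?P = UNIV \<times> {s. continuous_map (subtopology X A) euclideanreal s
      \<and> s \<in> extensional A}"
    by (simp add: RDirProd_carrier real_ring_simps CX_simps(1) top_A)
  define \<psi> where "\<psi> = (\<lambda>(c :: real, s). restrict (\<lambda>z. if z = x then c else s z) (topspace X))"
  have "bij_betw ?\<phi> (carrier (CX X)) (carrier ?P)"
  proof (rule bij_betw_byWitness[of _ \<psi>])
    show "\<forall>f \<in> carrier (CX X). \<psi> (?\<phi> f) = f"
      by (auto simp: \<psi>_def CX_carrier_iff A_def extensional_def fun_eq_iff)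
    show "\<forall>b \<in> carrier ?P. ?\<phi> (\<psi> b) = b"
      unfolding carrier_P using x by (auto simp: \<psi>_def A_def extensional_def fun_eq_iff)
    show "?\<phi> ` carrier (CX X) \<subseteq> carrier ?P"
      unfolding carrier_P by (auto simp: CX_carrier_iff intro: continuous_map_from_subtopology)
    show "\<psi> ` carrier ?P \<subseteq> carrier (CX X)"
      unfolding carrier_P using continuous_map_update_isolated_point[OF assms(2,3)]
      by (auto simp: \<psi>_def A_def intro!: restrict_in_CX)
  qed
  then show ?thesis
    using x by (intro ring_iso_memI)
      (auto simp: bij_betw_def CX_simps RDirProd_simps real_ring_simps top_A A_def fun_eq_iff)
qed

lemma field_real_ring: "field real_ring"
proof -
  have "cring real_ring"
  proof (rule cringI)
    show "abelian_group real_ring"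
      by (rule abelian_groupI) (auto simp: real_ring_simps intro: exI[of _ "- x" for x])
    show "comm_monoid real_ring"
      by (rule comm_monoidI) (auto simp: real_ring_simps)
  qed (simp add: real_ring_simps distrib_right)
  moreover have "x \<in> Units real_ring" if "x \<noteq> 0" for x
    using that by (auto simp: Units_def real_ring_simps intro!: exI[of _ "inverse x"])
  ultimately show ?thesis by (intro cring.field_intro2) (auto simp: real_ring_simps)
qed

text \<open>
  The conclusion states elementwise that the principal ideal of \<open>e\<close> is minimal;
  \<open>e\<close> is the preimage of \<open>(\<one>, \<zero>)\<close>, so that ideal corresponds to \<open>K \<times> {\<zero>}\<close>.
\<close>
lemma ring_iso_RDirProd_field_minimal_principal_ideal:
  assumes "ring R" "field K" "ring S" "\<phi> \<in> ring_iso R (RDirProd K S)"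
  obtains e where "e \<in> carrier R" "e \<noteq> \<zero>\<^bsub>R\<^esub>"
    "\<And>a. \<lbrakk>a \<in> carrier R; e \<otimes>\<^bsub>R\<^esub> a \<noteq> \<zero>\<^bsub>R\<^esub>\<rbrakk> \<Longrightarrow> \<exists>b\<in>carrier R. e \<otimes>\<^bsub>R\<^esub> a \<otimes>\<^bsub>R\<^esub> b = e"
proof -
  interpret K: field K by fact
  interpret S: ring S by fact
  let ?P = "RDirProd K S"
  define \<psi> where "\<psi> = inv_into (carrier R) \<phi>"
  have \<psi>: "\<psi> \<in> ring_iso ?P R" unfolding \<psi>_def by (rule ring_iso_set_sym[OF assms(1,4)])
  have P: "ring ?P" by (rule RDirProd_ring[OF K.ring_axioms assms(3)])
  have carrier_P: "carrier ?P = carrier K \<times> carrier S" by (rule RDirProd_carrier)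
  note \<psi>_closed = ring_iso_memE(1)[OF \<psi>] and \<psi>_mult = ring_iso_memE(2)[OF \<psi>]
  have \<psi>_inj: "inj_on \<psi> (carrier ?P)" using ring_iso_memE(5)[OF \<psi>] by (rule bij_betw_imp_inj_on)
  have \<psi>_surj: "\<psi> ` carrier ?P = carrier R" using ring_iso_memE(5)[OF \<psi>] by (rule bij_betw_imp_surj_on)
  have \<psi>_zero: "\<psi> (\<zero>\<^bsub>K\<^esub>, \<zero>\<^bsub>S\<^esub>) = \<zero>\<^bsub>R\<^esub>"
    using ring_hom_zero[of \<psi> ?P R] \<psi> P assms(1) by (simp add: ring_iso_def RDirProd_simps)
  define e where "e = \<psi> (\<one>\<^bsub>K\<^esub>, \<zero>\<^bsub>S\<^esub>)"
  show thesis
  proof (rule that)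
    show "e \<in> carrier R" unfolding e_def by (rule \<psi>_closed) (simp add: carrier_P)
    show "e \<noteq> \<zero>\<^bsub>R\<^esub>"
      unfolding e_def \<psi>_zero[symmetric] using inj_onD[OF \<psi>_inj] by (fastforce simp: carrier_P)
  next
    fix a assume a: "a \<in> carrier R" and ea: "e \<otimes>\<^bsub>R\<^esub> a \<noteq> \<zero>\<^bsub>R\<^esub>"
    obtain c s where cs: "c \<in> carrier K" "s \<in> carrier S" "a = \<psi> (c, s)"
      using a \<psi>_surj carrier_P by (metis (no_types, lifting) SigmaE imageE)
    have "e \<otimes>\<^bsub>R\<^esub> a = \<psi> (c, \<zero>\<^bsub>S\<^esub>)"
      using cs \<psi>_mult[of "(\<one>\<^bsub>K\<^esub>, \<zero>\<^bsub>S\<^esub>)" "(c, s)"] by (simp add: e_def carrier_P RDirProd_simps)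
    then have "c \<noteq> \<zero>\<^bsub>K\<^esub>" using ea \<psi>_zero by auto
    then have c_inv: "inv\<^bsub>K\<^esub> c \<in> carrier K" "c \<otimes>\<^bsub>K\<^esub> inv\<^bsub>K\<^esub> c = \<one>\<^bsub>K\<^esub>"
      using cs(1) K.field_Units by auto
    have "e \<otimes>\<^bsub>R\<^esub> a \<otimes>\<^bsub>R\<^esub> \<psi> (inv\<^bsub>K\<^esub> c, \<zero>\<^bsub>S\<^esub>) = e"
      using \<open>e \<otimes>\<^bsub>R\<^esub> a = \<psi> (c, \<zero>\<^bsub>S\<^esub>)\<close> cs c_inv
        \<psi>_mult[of "(c, \<zero>\<^bsub>S\<^esub>)" "(inv\<^bsub>K\<^esub> c, \<zero>\<^bsub>S\<^esub>)"]
      by (simp add: e_def carrier_P RDirProd_simps)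
    moreover have "\<psi> (inv\<^bsub>K\<^esub> c, \<zero>\<^bsub>S\<^esub>) \<in> carrier R" using c_inv \<psi>_closed by (simp add: carrier_P)
    ultimately show "\<exists>b\<in>carrier R. e \<otimes>\<^bsub>R\<^esub> a \<otimes>\<^bsub>R\<^esub> b = e" by blast
  qed
qed

lemma isolated_point_if_CX_minimal_principal_ideal:
  assumes "tychonoff_space X" "e \<in> carrier (CX X)" "e \<noteq> \<zero>\<^bsub>CX X\<^esub>"
    and minimal: "\<And>a. \<lbrakk>a \<in> carrier (CX X); e \<otimes>\<^bsub>CX X\<^esub> a \<noteq> \<zero>\<^bsub>CX X\<^esub>\<rbrakk>
      \<Longrightarrow> \<exists>b\<in>carrier (CX X). e \<otimes>\<^bsub>CX X\<^esub> a \<otimes>\<^bsub>CX X\<^esub> b = e"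
  shows "\<exists>p\<in>topspace X. openin X {p}"
proof -
  have creg: "completely_regular_space X" using assms(1) by (simp add: tychonoff_space_def)
  obtain p where p: "p \<in> topspace X" "e p \<noteq> 0" using assms(2,3) CX_nonzero_iff by blast
  have "q = p" if q: "q \<in> topspace X" "e q \<noteq> 0" for q
  proof (rule ccontr)
    assume "q \<noteq> p"
    have "openin X (topspace X - {q})"
      using tychonoff_space_closedin_singleton[OF assms(1) q(1)] by (simp add: openin_diff)
    moreover have "p \<in> topspace X - {q}" using p(1) \<open>q \<noteq> p\<close> by blast
    ultimately obtain h where h: "h \<in> carrier (CX X)" "h p = 1" "supported_in X {h} (topspace X - {q})"
      by (rule CX_bump[OF creg])
    have "h q = 0" using h(3) q(1) by (auto simp: supported_in_def)
    have eh: "e \<otimes>\<^bsub>CX X\<^esub> h \<in> carrier (CX X)" by (rule CX_m_closed[OF assms(2) h(1)])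
    have "(e \<otimes>\<^bsub>CX X\<^esub> h) p \<noteq> 0" using p h(2) by (simp add: CX_simps(2))
    then have "e \<otimes>\<^bsub>CX X\<^esub> h \<noteq> \<zero>\<^bsub>CX X\<^esub>" using CX_nonzero_iff[OF eh] p(1) by blast
    then obtain b where "e \<otimes>\<^bsub>CX X\<^esub> h \<otimes>\<^bsub>CX X\<^esub> b = e" using minimal[OF h(1)] by blast
    then have "(e \<otimes>\<^bsub>CX X\<^esub> h \<otimes>\<^bsub>CX X\<^esub> b) q = e q" by simp
    then show False using q \<open>h q = 0\<close> by (simp add: CX_simps(2))
  qed
  then have "{z \<in> topspace X. e z \<in> - {0}} = {p}" using p by blast
  moreover have "openin X {z \<in> topspace X. e z \<in> - {0}}"
    using assms(2) by (intro openin_continuous_map_preimage) (auto simp: CX_carrier_iff)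
  ultimately show ?thesis using p(1) by auto
qed

theorem mainTheorem15:
  fixes X :: "'a topology"
  assumes "tychonoff_space X"
    and "\<exists>x y. x \<in> topspace X \<and> y \<in> topspace X \<and> x \<noteq> y"
  shows "((\<exists>x \<in> topspace X. openin X {x})
            \<longleftrightarrow> (\<exists>S :: ('a \<Rightarrow> real) ring. ring S \<and> CX X \<simeq> RDirProd real_ring S))
       \<and> ((\<exists>x \<in> topspace X. openin X {x}) \<longleftrightarrow> AG_has_leaf X)
       \<and> ((\<exists>x \<in> topspace X. openin X {x}) \<longleftrightarrow> \<not> AG_triangulated X)"
proof -
  have summand: "\<exists>S :: ('a \<Rightarrow> real) ring. ring S \<and> CX X \<simeq> RDirProd real_ring S"
    if "x \<in> topspace X" "openin X {x}" for x
    using CX_ring_iso_RDirProd_isolated_point[OF that(1)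
        tychonoff_space_closedin_singleton[OF assms(1) that(1)] that(2)] ring_CX
    unfolding is_ring_iso_def by blast
  have isolated_if_summand: "\<exists>x\<in>topspace X. openin X {x}"
    if "ring S" "\<phi> \<in> ring_iso (CX X) (RDirProd real_ring S)" for S :: "('a \<Rightarrow> real) ring" and \<phi>
    using ring_iso_RDirProd_field_minimal_principal_ideal[OF ring_CX field_real_ring that]
      isolated_point_if_CX_minimal_principal_ideal[OF assms(1)] by metis
  have leaf: "AG_has_leaf X" if "x \<in> topspace X" "openin X {x}" for x
    using AG_has_leaf_if_isolated_point[OF assms(1) that] assms(2) by metis
  show ?thesis
    using summand isolated_if_summand leaf not_AG_triangulated_if_leaf
      AG_triangulated_if_no_isolated_points[OF assms(1)]
    unfolding is_ring_iso_def by blast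
qed

end
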